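(* Let $\mathrel{W}$ be a tournament and $R$ a ranking on $\mathcal{X}$. Then $R$ is $\mathrel{W}$-feasible if and only if for every pair of $R$-adjacent alternatives $x,y$ with $xRy$, we have $x\mathrel{W}y$.
   Context: Let $\mathcal{X}$ be a finite set of alternatives. A proto-ranking is an irreflexive and transitive binary relation on $\mathcal{X}$; a ranking is a total proto-ranking; a tournament is a total and asymmetric binary relation on $\mathcal{X}$. Interaction: given a tournament $\mathrel{W}$, start from $R_0=\varnothing$; in each period with $R_{t-1}$ not total a chair offers a pair $\{x,y\}$ of distinct alternatives unranked by $R_{t-1}$, the winner is $x$ if $x\mathrel{W}y$ and $y$ otherwise, and $R_t$ is the transitive closure of $R_{t-1}\cup\{(\text{winner},\text{loser})\}$; stop when $R_t$ is total. A strategy assigns to each non-terminal history (sequence of (winner, loser) pairs) a pair unranked at it; its outcome under $\mathrel{W}$ is the final ranking. A ranking is $\mathrel{W}$-feasible if it is the outcome under $\mathrel{W}$ of some strategy. For a ranking $R$, alternatives $x,y$ with $xRy$ are $R$-adjacent if there is no $z$ with $xRzRy$. *)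

theory Defs
  imports Main
begin

definition proto_ranking :: "'a set \<Rightarrow> ('a \<times> 'a) set \<Rightarrow> bool" where
  "proto_ranking X R \<longleftrightarrow> R \<subseteq> X \<times> X \<and> irrefl R \<and> trans R"

definition ranking :: "'a set \<Rightarrow> ('a \<times> 'a) set \<Rightarrow> bool" where
  "ranking X R \<longleftrightarrow> proto_ranking X R \<and> total_on X R"

definition tournament :: "'a set \<Rightarrow> ('a \<times> 'a) set \<Rightarrow> bool" where
  "tournament X W \<longleftrightarrow> W \<subseteq> X \<times> X \<and> total_on X W \<and> asym W"

text \<open>Relation generated by a history (list of (winner, loser) pairs):
  R_0 = {}, R_t = transitive closure of R_(t-1) with the new pair.\<close>
definition hist_rel :: "('a \<times> 'a) list \<Rightarrow> ('a \<times> 'a) set" where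
  "hist_rel h = foldl (\<lambda>R p. trancl (R \<union> {p})) {} h"

definition unranked :: "('a \<times> 'a) set \<Rightarrow> 'a \<Rightarrow> 'a \<Rightarrow> bool" where
  "unranked R x y \<longleftrightarrow> (x, y) \<notin> R \<and> (y, x) \<notin> R"

text \<open>A strategy maps every non-terminal history to an (ordered representative of an)
  unordered pair of distinct alternatives unranked at that history.\<close>
definition strategy :: "'a set \<Rightarrow> (('a \<times> 'a) list \<Rightarrow> 'a \<times> 'a) \<Rightarrow> bool" where
  "strategy X \<sigma> \<longleftrightarrow> (\<forall>h. set h \<subseteq> X \<times> X \<and> \<not> total_on X (hist_rel h) \<longrightarrow>
      (let (x, y) = \<sigma> h in x \<in> X \<and> y \<in> X \<and> x \<noteq> y \<and> unranked (hist_rel h) x y))"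

definition winner_pair :: "('a \<times> 'a) set \<Rightarrow> 'a \<times> 'a \<Rightarrow> 'a \<times> 'a" where
  "winner_pair W p = (if p \<in> W then p else (snd p, fst p))"

inductive reached :: "'a set \<Rightarrow> ('a \<times> 'a) set \<Rightarrow> (('a \<times> 'a) list \<Rightarrow> 'a \<times> 'a)
    \<Rightarrow> ('a \<times> 'a) list \<Rightarrow> bool"
  for X W \<sigma> where
  start: "reached X W \<sigma> []"
| step: "reached X W \<sigma> h \<Longrightarrow> \<not> total_on X (hist_rel h) \<Longrightarrow>
           reached X W \<sigma> (h @ [winner_pair W (\<sigma> h)])"

definition outcome_of :: "'a set \<Rightarrow> ('a \<times> 'a) set \<Rightarrow> (('a \<times> 'a) list \<Rightarrow> 'a \<times> 'a)
    \<Rightarrow> ('a \<times> 'a) set \<Rightarrow> bool" where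
  "outcome_of X W \<sigma> R \<longleftrightarrow> (\<exists>h. reached X W \<sigma> h \<and> total_on X (hist_rel h) \<and> R = hist_rel h)"

definition feasible :: "'a set \<Rightarrow> ('a \<times> 'a) set \<Rightarrow> ('a \<times> 'a) set \<Rightarrow> bool" where
  "feasible X W R \<longleftrightarrow> ranking X R \<and> (\<exists>\<sigma>. strategy X \<sigma> \<and> outcome_of X W \<sigma> R)"

definition adjacent :: "('a \<times> 'a) set \<Rightarrow> 'a \<Rightarrow> 'a \<Rightarrow> bool" where
  "adjacent R x y \<longleftrightarrow> (x, y) \<in> R \<and> \<not> (\<exists>z. (x, z) \<in> R \<and> (z, y) \<in> R)"

end

theory Submission
  imports Defs
begin

text \<open>
  The relation generated by a history is the transitive closure of the pairs played, so an
  adjacent pair of the outcome must itself have been played, and played pairs are ordered by W.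
  Conversely, suppose every R-adjacent pair is W-ordered, and let the chair offer an unranked
  R-adjacent pair whenever there is one. Each such comparison is won in agreement with R, so the
  generated relation stays inside R. A finite strict order is the transitive closure of its
  adjacent pairs, so while the generated relation is not total some R-adjacent pair is still
  unranked. Since every strategy terminates, the outcome is a total relation inside R, i.e. R.
\<close>

lemma hist_rel_snoc: "hist_rel (h @ [p]) = (hist_rel h \<union> {p})\<^sup>+"
  by (simp add: hist_rel_def)

lemma hist_rel_eq_trancl: "hist_rel h = (set h)\<^sup>+"
proof (induction h rule: rev_induct)
  case (snoc p h)
  have "hist_rel (h @ [p]) = ((set h)\<^sup>+ \<union> {p})\<^sup>+"
    by (simp add: hist_rel_snoc snoc.IH)
  also have "\<dots> = (set h \<union> {p})\<^sup>+"
    by (rule trancl_trancl_Un)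
  finally show ?case by simp
qed (simp add: hist_rel_def)

lemma reached_subset_Times:
  assumes "reached X W \<sigma> h" and "strategy X \<sigma>"
  shows "set h \<subseteq> X \<times> X"
  using assms(1)
proof induction
  case (step h)
  then show ?case
    using assms(2) unfolding strategy_def winner_pair_def
    by (cases "\<sigma> h") (auto simp: Let_def split: if_splits)
qed simp

lemma reached_offer:
  assumes "reached X W \<sigma> h" and "strategy X \<sigma>" and "\<not> total_on X (hist_rel h)"
    and "\<sigma> h = (x, y)"
  shows "x \<in> X" and "y \<in> X" and "x \<noteq> y" and "unranked (hist_rel h) x y"
  using assms reached_subset_Times[OF assms(1,2)] unfolding strategy_def by auto

lemma winner_pair_in_tournament:
  assumes "tournament X W" and "x \<in> X" and "y \<in> X" and "x \<noteq> y"
  shows "winner_pair W (x, y) \<in> W"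
  using assms unfolding tournament_def total_on_def winner_pair_def by auto

lemma reached_subset_tournament:
  assumes "reached X W \<sigma> h" and "strategy X \<sigma>" and "tournament X W"
  shows "set h \<subseteq> W"
  using assms(1)
proof induction
  case (step h)
  obtain x y where offer: "\<sigma> h = (x, y)" by fastforce
  have "winner_pair W (x, y) \<in> W"
    using reached_offer(1-3)[OF step.hyps(1) assms(2) step.hyps(2) offer]
      winner_pair_in_tournament[OF assms(3)]
    by blast
  with step.IH offer show ?case by simp
qed simp

lemma strategy_has_outcome:
  assumes "finite X" and "strategy X \<sigma>"
  shows "\<exists>h. reached X W \<sigma> h \<and> total_on X (hist_rel h)"
proof -
  have hist_rel_in: "hist_rel h \<subseteq> X \<times> X" if "reached X W \<sigma> h" for h
    using reached_subset_Times[OF that assms(2)] by (simp add: hist_rel_eq_trancl trancl_subset_Sigma)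
  have "\<forall>h. reached X W \<sigma> h \<longrightarrow> card (hist_rel h) < Suc (card (X \<times> X))"
    using card_mono[OF _ hist_rel_in] assms(1) by (simp add: less_Suc_eq_le)
  from Lattices_Big.ex_has_greatest_nat[OF reached.start this]
  obtain h where reached: "reached X W \<sigma> h"
    and maximal: "\<And>h'. reached X W \<sigma> h' \<Longrightarrow> card (hist_rel h') \<le> card (hist_rel h)"
    by blast
  have "total_on X (hist_rel h)"
  proof (rule ccontr)
    assume not_total: "\<not> total_on X (hist_rel h)"
    obtain x y where offer: "\<sigma> h = (x, y)" by fastforce
    define h' where "h' = h @ [winner_pair W (\<sigma> h)]"
    have reached': "reached X W \<sigma> h'"
      unfolding h'_def using reached not_total by (rule reached.step)
    have "winner_pair W (\<sigma> h) \<notin> hist_rel h"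
      using reached_offer(4)[OF reached assms(2) not_total offer] offer
      unfolding winner_pair_def unranked_def by auto
    moreover have "insert (winner_pair W (\<sigma> h)) (hist_rel h) \<subseteq> hist_rel h'"
      unfolding h'_def hist_rel_snoc by (auto intro: r_into_trancl')
    moreover have "finite (hist_rel h')"
      using hist_rel_in[OF reached'] assms(1) finite_subset by blast
    ultimately have "card (hist_rel h) < card (hist_rel h')"
      by (intro psubset_card_mono) auto
    with maximal[OF reached'] show False by simp
  qed
  with reached show ?thesis by blast
qed

lemma adjacent_trancl_imp_mem:
  assumes "adjacent (r\<^sup>+) x y"
  shows "(x, y) \<in> r"
proof -
  from assms obtain z where "(x, z) \<in> r\<^sup>*" and zy: "(z, y) \<in> r"
    unfolding adjacent_def by (auto dest: tranclD2)
  then consider "z = x" | "(x, z) \<in> r\<^sup>+"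
    by (auto dest: rtranclD)
  then show ?thesis
  proof cases
    case 2
    with zy assms show ?thesis unfolding adjacent_def by blast
  qed (use zy in simp)
qed

lemma trancl_adjacent_eq:
  assumes "finite R" and "trans R" and "irrefl R"
  shows "{(x, y). adjacent R x y}\<^sup>+ = R"
proof
  show "{(x, y). adjacent R x y}\<^sup>+ \<subseteq> R"
    using trancl_mono_subset[of "{(x, y). adjacent R x y}" R] assms(2)
    by (auto simp: adjacent_def)
next
  let ?between = "\<lambda>x y. {z. (x, z) \<in> R \<and> (z, y) \<in> R}"
  have "(x, y) \<in> {(x, y). adjacent R x y}\<^sup>+"
    if "(x, y) \<in> R" and "card (?between x y) = n" for n x y
    using that
  proof (induction n arbitrary: x y rule: less_induct)
    case (less n)
    show ?case
    proof (cases "adjacent R x y")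
      case False
      with less.prems obtain z where xz: "(x, z) \<in> R" and zy: "(z, y) \<in> R"
        unfolding adjacent_def by blast
      have "finite (?between x y)"
        by (rule finite_subset[OF _ finite_Range[OF assms(1)]]) auto
      moreover have "?between x z \<subset> ?between x y" and "?between z y \<subset> ?between x y"
        using xz zy assms(2,3) unfolding trans_def irrefl_def by blast+
      ultimately have "card (?between x z) < n" and "card (?between z y) < n"
        using less.prems(2) by (auto intro: psubset_card_mono)
      then show ?thesis
        using less.IH[OF _ xz refl] less.IH[OF _ zy refl] by (blast intro: trancl_trans)
    qed auto
  qed
  then show "R \<subseteq> {(x, y). adjacent R x y}\<^sup>+"
    by auto
qed

lemma finite_ranking:
  assumes "finite X" and "ranking X R"
  shows "finite R"
  using assms finite_subset[of R "X \<times> X"] unfolding ranking_def proto_ranking_def by auto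

lemma ranking_asym:
  assumes "ranking X R" and "(x, y) \<in> R"
  shows "(y, x) \<notin> R"
  using assms unfolding ranking_def proto_ranking_def irrefl_def trans_def by blast

lemma ranking_eq_if_total_subset:
  assumes "ranking X R" and "r \<subseteq> R" and "total_on X r"
  shows "r = R"
proof
  show "R \<subseteq> r"
  proof safe
    fix x y assume xy: "(x, y) \<in> R"
    with assms(1) have "x \<in> X" "y \<in> X" "x \<noteq> y"
      unfolding ranking_def proto_ranking_def irrefl_def by auto
    with assms(3) have "(x, y) \<in> r \<or> (y, x) \<in> r"
      unfolding total_on_def by blast
    with xy assms(2) ranking_asym[OF assms(1)] show "(x, y) \<in> r" by blast
  qed
qed (rule assms(2))

lemma ex_adjacent_unranked:
  assumes "finite X" and "ranking X R" and "r \<subseteq> R" and "trans r" and "\<not> total_on X r"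
  shows "\<exists>x y. adjacent R x y \<and> unranked r x y"
proof (rule ccontr)
  assume none: "\<not> ?thesis"
  have "{(x, y). adjacent R x y} \<subseteq> r"
  proof safe
    fix x y assume "adjacent R x y"
    moreover from this have "(y, x) \<notin> r"
      using assms(3) ranking_asym[OF assms(2)] unfolding adjacent_def by blast
    ultimately show "(x, y) \<in> r"
      using none unfolding unranked_def by blast
  qed
  then have "{(x, y). adjacent R x y}\<^sup>+ \<subseteq> r\<^sup>+"
    by (rule trancl_mono_subset)
  moreover have "trans R" and "irrefl R"
    using assms(2) unfolding ranking_def proto_ranking_def by auto
  ultimately have "R \<subseteq> r"
    using trancl_adjacent_eq[OF finite_ranking[OF assms(1,2)]] assms(4) by simp
  with assms(2,5) show False
    unfolding ranking_def total_on_def by blast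
qed

text \<open>The fallback branch only makes this a strategy at histories that never occur in play.\<close>

definition adjacent_first :: "'a set \<Rightarrow> ('a \<times> 'a) set \<Rightarrow> ('a \<times> 'a) list \<Rightarrow> 'a \<times> 'a" where
  "adjacent_first X R h =
    (if \<exists>x y. adjacent R x y \<and> unranked (hist_rel h) x y
     then SOME (x, y). adjacent R x y \<and> unranked (hist_rel h) x y
     else SOME (x, y). x \<in> X \<and> y \<in> X \<and> x \<noteq> y \<and> unranked (hist_rel h) x y)"

lemma someI_pair: "\<exists>x y. P x y \<Longrightarrow> P (fst (SOME (x, y). P x y)) (snd (SOME (x, y). P x y))"
proof -
  assume "\<exists>x y. P x y"
  then obtain x y where "case_prod P (x, y)" by auto
  then have "case_prod P (SOME p. case_prod P p)" by (rule someI)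
  then show ?thesis unfolding case_prod_beta .
qed

lemma adjacent_first_adjacent:
  assumes "\<exists>x y. adjacent R x y \<and> unranked (hist_rel h) x y" and "adjacent_first X R h = (x, y)"
  shows "adjacent R x y" and "unranked (hist_rel h) x y"
  using someI_pair[OF assms(1)] assms unfolding adjacent_first_def by auto

lemma strategy_adjacent_first:
  assumes "ranking X R"
  shows "strategy X (adjacent_first X R)"
  unfolding strategy_def
proof (intro allI impI)
  fix h assume "set h \<subseteq> X \<times> X \<and> \<not> total_on X (hist_rel h)"
  then have unranked_ex: "\<exists>x y. x \<in> X \<and> y \<in> X \<and> x \<noteq> y \<and> unranked (hist_rel h) x y"
    unfolding total_on_def unranked_def by auto
  obtain x y where offer: "adjacent_first X R h = (x, y)" by fastforce
  have "x \<in> X \<and> y \<in> X \<and> x \<noteq> y \<and> unranked (hist_rel h) x y"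
  proof (cases "\<exists>x y. adjacent R x y \<and> unranked (hist_rel h) x y")
    case True
    with adjacent_first_adjacent[OF True offer] assms show ?thesis
      unfolding adjacent_def ranking_def proto_ranking_def irrefl_def by auto
  next
    case False
    with someI_pair[OF unranked_ex] offer show ?thesis
      unfolding adjacent_first_def by auto
  qed
  with offer show "let (x, y) = adjacent_first X R h in
      x \<in> X \<and> y \<in> X \<and> x \<noteq> y \<and> unranked (hist_rel h) x y"
    by simp
qed

lemma reached_adjacent_first_subset:
  assumes "finite X" and "ranking X R" and adjacent_W: "\<forall>x y. adjacent R x y \<longrightarrow> (x, y) \<in> W"
    and "reached X W (adjacent_first X R) h"
  shows "hist_rel h \<subseteq> R"
  using assms(4)
proof induction
  case (step h)
  obtain x y where offer: "adjacent_first X R h = (x, y)" by fastforce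
  have "trans (hist_rel h)"
    by (simp add: hist_rel_eq_trancl)
  with step ex_adjacent_unranked[OF assms(1,2)] have "adjacent R x y"
    using adjacent_first_adjacent(1)[OF _ offer] by blast
  with adjacent_W have "(x, y) \<in> R" and "winner_pair W (x, y) = (x, y)"
    unfolding adjacent_def winner_pair_def by auto
  with step.IH have "hist_rel (h @ [winner_pair W (adjacent_first X R h)]) \<subseteq> R\<^sup>+"
    unfolding offer hist_rel_snoc by (intro trancl_mono_subset) auto
  with assms(2) show ?case
    unfolding ranking_def proto_ranking_def by simp
qed (simp add: hist_rel_def)

lemma feasible_imp_adjacent_in_tournament:
  assumes "tournament X W" and "feasible X W R" and "adjacent R x y"
  shows "(x, y) \<in> W"
proof -
  obtain \<sigma> h where strategy: "strategy X \<sigma>" and reached: "reached X W \<sigma> h"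
    and outcome: "R = hist_rel h"
    using assms(2) unfolding feasible_def outcome_of_def by blast
  from assms(3) have "adjacent ((set h)\<^sup>+) x y"
    unfolding outcome hist_rel_eq_trancl .
  then have "(x, y) \<in> set h"
    by (rule adjacent_trancl_imp_mem)
  with reached_subset_tournament[OF reached strategy assms(1)] show ?thesis
    by blast
qed

lemma feasible_if_adjacent_in_tournament:
  assumes "finite X" and "ranking X R" and "\<forall>x y. adjacent R x y \<longrightarrow> (x, y) \<in> W"
  shows "feasible X W R"
proof -
  have strategy: "strategy X (adjacent_first X R)"
    using assms(2) by (rule strategy_adjacent_first)
  then obtain h where reached: "reached X W (adjacent_first X R) h"
    and total: "total_on X (hist_rel h)"
    using strategy_has_outcome[OF assms(1)] by blast
  have "hist_rel h = R"
    using ranking_eq_if_total_subset[OF assms(2) reached_adjacent_first_subset[OF assms reached] total] .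
  with reached total assms(2) strategy show ?thesis
    unfolding feasible_def outcome_of_def by blast
qed

theorem mainTheorem12:
  fixes X :: "'a set" and W R :: "('a \<times> 'a) set"
  assumes "finite X" and "tournament X W" and "ranking X R"
  shows "feasible X W R \<longleftrightarrow> (\<forall>x y. adjacent R x y \<longrightarrow> (x, y) \<in> W)"
proof
  show "\<forall>x y. adjacent R x y \<longrightarrow> (x, y) \<in> W" if "feasible X W R"
    using feasible_imp_adjacent_in_tournament[OF assms(2) that] by blast
  show "feasible X W R" if "\<forall>x y. adjacent R x y \<longrightarrow> (x, y) \<in> W"
    using feasible_if_adjacent_in_tournament[OF assms(1,3) that] .
qed

end
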